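(* Let $\mathcal M\subseteq\mathcal O_{\mathbb C^2,0}^2$ (coordinates $x,y$) be the submodule generated by the columns of $\begin{bmatrix}x&0&y\\ y&x&0\end{bmatrix}$, and let $h=(x,3y)$. Then $h\in(\mathcal M_{S_3})_0$ but $h\notin(\mathcal M_{S_1})_0$. In particular, $\mathcal M_{S_3}\not\subseteq\mathcal M_{S_1}$ in general.
   Context: $\mathcal M$ has generic rank $2$. $\pi_1,\pi_2:\mathbb C^2\times\mathbb C^2\to\mathbb C^2$ are the projections. For $g\in\mathcal O^q$, $g_D=(g\circ\pi_1,g\circ\pi_2)$; for a submodule or ideal $N$, $N_D$ is generated by $\{g_D:g\in N\}$. $\overline{\cdot}$ denotes integral closure. For an ideal $I\subseteq\mathcal O_{\mathbb C^2,0}$, its Lipschitz saturation is $I_S=\{f:f_D\in\overline{I_D}\text{ at }(0,0)\}$. $J_k(N)$ is the ideal of $k\times k$ minors of a matrix of generators of $N$, $(h,\mathcal M)$ the module generated by $h$ and $\mathcal M$. Definitions: $(\mathcal M_{S_1})_0=\{h:h_D\in\overline{\mathcal M_D}\text{ at }(0,0)\}$; $(\mathcal M_{S_3})_0=\{h:J_2((h,\mathcal M))\subseteq(J_2(\mathcal M))_S\text{ at }0\}$. *)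

theory Defs
  imports "HOL-Analysis.Analysis"
begin

section \<open>Complex scalar multiplication on C^n modelled by nested products of complex\<close>

class cscal =
  fixes cscal :: "complex \<Rightarrow> 'a \<Rightarrow> 'a"

instantiation complex :: cscal
begin
definition cscal_complex :: "complex \<Rightarrow> complex \<Rightarrow> complex" where
  "cscal_complex c z = c * z"
instance ..
end

instantiation prod :: (cscal, cscal) cscal
begin
definition cscal_prod :: "complex \<Rightarrow> 'a \<times> 'b \<Rightarrow> 'a \<times> 'b" where
  "cscal_prod c p = (cscal c (fst p), cscal c (snd p))"
instance ..
end

definition holo_at :: "('a::{cscal,real_normed_vector} \<Rightarrow> 'b::{cscal,real_normed_vector}) \<Rightarrow> 'a \<Rightarrow> bool" where
  "holo_at f a \<longleftrightarrow> (\<exists>U. open U \<and> a \<in> U \<and>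
     (\<forall>z\<in>U. \<exists>L. (f has_derivative L) (at z) \<and> (\<forall>c v. L (cscal c v) = cscal c (L v))))"

definition span_at :: "'a::{cscal,real_normed_vector} \<Rightarrow> ('a \<Rightarrow> 'b::{cscal,comm_monoid_add}) set
     \<Rightarrow> ('a \<Rightarrow> 'b) \<Rightarrow> bool" where
  "span_at a G h \<longleftrightarrow> (\<exists>(n::nat) (b::nat \<Rightarrow> 'a \<Rightarrow> complex) g.
     (\<forall>i<n. holo_at (b i) a \<and> g i \<in> G) \<and>
     eventually (\<lambda>z. h z = (\<Sum>i<n. cscal (b i z) (g i z))) (nhds a))"

text \<open>Integral closure at a (curve criterion): h is in the integral closure of the module
  generated by G iff for every holomorphic curve germ phi:(C,0)->(X,a), h o phi lies in
  the O_1-module generated by the pull-backs g o phi, g in G.\<close>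
definition intclos_at :: "'a::{cscal,real_normed_vector} \<Rightarrow> ('a \<Rightarrow> 'b::{cscal,real_normed_vector}) set
     \<Rightarrow> ('a \<Rightarrow> 'b) \<Rightarrow> bool" where
  "intclos_at a G h \<longleftrightarrow> holo_at h a \<and>
     (\<forall>\<phi>::complex \<Rightarrow> 'a. holo_at \<phi> 0 \<and> \<phi> 0 = a \<longrightarrow> span_at 0 ((\<lambda>g. g \<circ> \<phi>) ` G) (h \<circ> \<phi>))"

type_synonym C2 = "complex \<times> complex"

definition dbl :: "(C2 \<Rightarrow> 'b) \<Rightarrow> (C2 \<times> C2 \<Rightarrow> 'b \<times> 'b)" where
  "dbl g = (\<lambda>p. (g (fst p), g (snd p)))"

definition gen_at0 :: "(C2 \<Rightarrow> 'b::{cscal,comm_monoid_add}) set \<Rightarrow> (C2 \<Rightarrow> 'b) set" where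
  "gen_at0 G = {g. span_at 0 G g}"

definition lip_sat :: "(C2 \<Rightarrow> complex) set \<Rightarrow> (C2 \<Rightarrow> complex) set" where
  "lip_sat Igens = {f. holo_at f 0 \<and> intclos_at (0,0) (dbl ` gen_at0 Igens) (dbl f)}"

text \<open>Ideal generators of J_2: all 2x2 minors of the matrix whose columns are the generators.\<close>
definition J2 :: "(C2 \<Rightarrow> C2) set \<Rightarrow> (C2 \<Rightarrow> complex) set" where
  "J2 G = {(\<lambda>z. fst (u z) * snd (v z) - snd (u z) * fst (v z)) | u v. u \<in> G \<and> v \<in> G}"

definition MS1 :: "(C2 \<Rightarrow> C2) set \<Rightarrow> (C2 \<Rightarrow> C2) set" where
  "MS1 Mgens = {h. holo_at h 0 \<and> intclos_at (0,0) (dbl ` gen_at0 Mgens) (dbl h)}"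

definition MS3 :: "(C2 \<Rightarrow> C2) set \<Rightarrow> (C2 \<Rightarrow> C2) set" where
  "MS3 Mgens = {h. holo_at h 0 \<and> gen_at0 (J2 (insert h Mgens)) \<subseteq> lip_sat (J2 Mgens)}"

definition Mex :: "(C2 \<Rightarrow> C2) set" where
  "Mex = {(\<lambda>(x,y). (x, y)), (\<lambda>(x,y). (0, x)), (\<lambda>(x,y). (y, 0))}"

end

theory Submission
  imports Defs "HOL-Library.Landau_Symbols"
begin

(* Every 2x2 minor of the matrix with columns h and the generators of M is a constant multiple
   of a minor of M; e.g. det(h, (x,y)) = -2 det((y,0), (0,x)). So J_2((h,M)) lies in the ideal
   J_2(M), which is contained in its own Lipschitz saturation, and h is in M_S3.

   For h not in M_S1 test the curve criterion on the curve t -> ((t,0),(0,t)) in the double,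
   read through the functional (a,b) -> a_1 - b_2. Every generator u of M has
   u_1(t,0) = u_2(0,t) = c t, so for g = sum b_i u_i in M this quantity is
   t * sum c_i (b_i(t,0) - b_i(0,t)), which is o(t) because the b_i are continuous.
   Since the coefficients in the curve criterion are continuous too, the same holds for every
   element of the pull-back of M_D, but for h the quantity is t - 3t = -2t. *)

definition cscal_linear :: "('a::cscal \<Rightarrow> 'b::cscal) \<Rightarrow> bool" where
  "cscal_linear L \<longleftrightarrow> (\<forall>c v. L (cscal c v) = cscal c (L v))"

lemma holo_at_iff:
  "holo_at f a \<longleftrightarrow>
     (\<exists>U. open U \<and> a \<in> U \<and> (\<forall>z\<in>U. \<exists>L. (f has_derivative L) (at z) \<and> cscal_linear L))"
  unfolding holo_at_def cscal_linear_def ..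

lemma holo_at_iff_eventually:
  "holo_at f a \<longleftrightarrow> (\<forall>\<^sub>F z in nhds a. \<exists>L. (f has_derivative L) (at z) \<and> cscal_linear L)"
  unfolding holo_at_iff eventually_nhds ..

lemma holo_at_combine:
  assumes "holo_at f a" "holo_at g a"
    and "\<And>z L M. (f has_derivative L) (at z) \<Longrightarrow> cscal_linear L \<Longrightarrow>
           (g has_derivative M) (at z) \<Longrightarrow> cscal_linear M \<Longrightarrow>
           \<exists>N. (H has_derivative N) (at z) \<and> cscal_linear N"
  shows "holo_at H a"
  using eventually_conj[OF assms(1,2)[unfolded holo_at_iff_eventually]]
  unfolding holo_at_iff_eventually by (rule eventually_mono) (use assms(3) in blast)

lemma holo_at_linear:
  assumes "bounded_linear L" "cscal_linear L"
  shows "holo_at L a"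
  unfolding holo_at_iff_eventually
  using assms bounded_linear_imp_has_derivative by (intro always_eventually) blast

lemma holo_at_const: "holo_at (\<lambda>z. c::complex) a"
  unfolding holo_at_iff_eventually
  by (intro always_eventually allI exI[of _ "\<lambda>_. 0"]) (simp add: cscal_linear_def cscal_complex_def)

lemma holo_at_fst: "holo_at fst a"
  by (intro holo_at_linear bounded_linear_fst) (simp add: cscal_linear_def cscal_prod_def)

lemma holo_at_snd: "holo_at snd a"
  by (intro holo_at_linear bounded_linear_snd) (simp add: cscal_linear_def cscal_prod_def)

lemma holo_at_add:
  fixes f g :: "'a::{cscal,real_normed_vector} \<Rightarrow> complex"
  assumes "holo_at f a" "holo_at g a"
  shows "holo_at (\<lambda>z. f z + g z) a"
  using assms by (rule holo_at_combine)
    (auto intro!: has_derivative_add simp: cscal_linear_def cscal_complex_def algebra_simps)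

lemma holo_at_mult:
  fixes f g :: "'a::{cscal,real_normed_vector} \<Rightarrow> complex"
  assumes "holo_at f a" "holo_at g a"
  shows "holo_at (\<lambda>z. f z * g z) a"
  using assms
proof (rule holo_at_combine)
  fix z L M
  assume "(f has_derivative L) (at z)" "cscal_linear L" "(g has_derivative M) (at z)" "cscal_linear M"
  then show "\<exists>N. ((\<lambda>z. f z * g z) has_derivative N) (at z) \<and> cscal_linear N"
    by (intro exI[of _ "\<lambda>v. f z * M v + L v * g z"] conjI has_derivative_mult)
      (auto simp: cscal_linear_def cscal_complex_def algebra_simps)
qed

lemma holo_at_diff:
  fixes f g :: "'a::{cscal,real_normed_vector} \<Rightarrow> complex"
  assumes "holo_at f a" "holo_at g a"
  shows "holo_at (\<lambda>z. f z - g z) a"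
  using holo_at_add[OF assms(1) holo_at_mult[OF holo_at_const assms(2)], of "-1"] by simp

lemma holo_at_sum:
  fixes f :: "nat \<Rightarrow> 'a::{cscal,real_normed_vector} \<Rightarrow> complex"
  assumes "\<forall>i<n. holo_at (f i) a"
  shows "holo_at (\<lambda>z. \<Sum>i<n. f i z) a"
  using assms by (induction n) (simp_all add: holo_at_const holo_at_add)

lemma holo_at_cong:
  assumes "\<forall>\<^sub>F z in nhds a. f z = g z" "holo_at g a"
  shows "holo_at f a"
proof -
  obtain U where U: "open U" "a \<in> U" "\<forall>z\<in>U. f z = g z"
    using assms(1) unfolding eventually_nhds by blast
  have "\<forall>\<^sub>F z in nhds a. z \<in> U" using U(1,2) by (rule eventually_nhds_in_open)
  moreover have "\<forall>\<^sub>F z in nhds a. \<exists>L. (g has_derivative L) (at z) \<and> cscal_linear L"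
    using assms(2) unfolding holo_at_iff_eventually .
  ultimately show ?thesis
    unfolding holo_at_iff_eventually
  proof eventually_elim
    case (elim z)
    then show ?case
      using has_derivative_transform_within_open[OF _ U(1), of g _ z UNIV f] U(3) by auto
  qed
qed

lemma holo_at_imp_isCont: "holo_at f a \<Longrightarrow> isCont f a"
  unfolding holo_at_def using has_derivative_continuous by blast

lemma holo_at_dbl:
  fixes f :: "C2 \<Rightarrow> 'b::{cscal,real_normed_vector}"
  assumes "holo_at f a" "holo_at f b"
  shows "holo_at (dbl f) (a, b)"
proof -
  obtain U where U: "open U" "a \<in> U" "\<forall>z\<in>U. \<exists>L. (f has_derivative L) (at z) \<and> cscal_linear L"
    using assms(1) unfolding holo_at_iff by blast
  obtain V where V: "open V" "b \<in> V" "\<forall>z\<in>V. \<exists>L. (f has_derivative L) (at z) \<and> cscal_linear L"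
    using assms(2) unfolding holo_at_iff by blast
  have deriv: "\<exists>L. (dbl f has_derivative L) (at p) \<and> cscal_linear L" if p: "p \<in> U \<times> V" for p
  proof -
    have "fst p \<in> U" "snd p \<in> V" using p by (auto simp: mem_Times_iff)
    then obtain L M where L: "(f has_derivative L) (at (fst p))" "cscal_linear L"
      and M: "(f has_derivative M) (at (snd p))" "cscal_linear M"
      using U(3) V(3) by blast
    have "((\<lambda>q. f (fst q)) has_derivative (\<lambda>v. L (fst v))) (at p)"
      using has_derivative_compose[OF has_derivative_fst[OF has_derivative_ident] L(1)] by simp
    moreover have "((\<lambda>q. f (snd q)) has_derivative (\<lambda>v. M (snd v))) (at p)"
      using has_derivative_compose[OF has_derivative_snd[OF has_derivative_ident] M(1)] by simp
    ultimately have "(dbl f has_derivative (\<lambda>v. (L (fst v), M (snd v)))) (at p)"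
      unfolding dbl_def by (rule has_derivative_Pair)
    with L(2) M(2) show ?thesis
      by (auto simp: cscal_linear_def cscal_prod_def)
  qed
  show ?thesis
    unfolding holo_at_iff
  proof (intro exI[of _ "U \<times> V"] conjI ballI deriv)
    show "open (U \<times> V)" using U(1) V(1) by (rule open_Times)
  qed (use U(2) V(2) in auto)
qed

lemma span_at_generator:
  fixes g :: "'a::{cscal,real_normed_vector} \<Rightarrow> 'b::{cscal,comm_monoid_add}"
  assumes "g \<in> G" "\<And>v::'b. cscal 1 v = v"
  shows "span_at a G g"
  unfolding span_at_def
  by (intro exI[of _ "1::nat"] exI[of _ "\<lambda>_ _. 1"] exI[of _ "\<lambda>_. g"])
    (simp add: assms holo_at_const)

lemma intclos_at_generator:
  fixes h :: "'a::{cscal,real_normed_vector} \<Rightarrow> 'b::{cscal,real_normed_vector}"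
  assumes "holo_at h a" "h \<in> G" "\<And>v::'b. cscal 1 v = v"
  shows "intclos_at a G h"
  unfolding intclos_at_def using assms by (auto intro: span_at_generator)

lemma holo_at_span_at:
  fixes f :: "'a::{cscal,real_normed_vector} \<Rightarrow> complex"
  assumes "\<forall>g\<in>G. holo_at g a" "span_at a G f"
  shows "holo_at f a"
proof -
  obtain n and b :: "nat \<Rightarrow> 'a \<Rightarrow> complex" and g where hb: "\<forall>i<n. holo_at (b i) a \<and> g i \<in> G"
    and ev: "\<forall>\<^sub>F z in nhds a. f z = (\<Sum>i<n. b i z * g i z)"
    using assms(2) unfolding span_at_def cscal_complex_def by blast
  have "holo_at (\<lambda>z. \<Sum>i<n. b i z * g i z) a"
    using hb assms(1) by (intro holo_at_sum allI impI holo_at_mult) auto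
  with ev show ?thesis by (rule holo_at_cong)
qed

lemma gen_at0_subset_lip_sat:
  assumes "\<forall>g\<in>G. holo_at g 0"
  shows "gen_at0 G \<subseteq> lip_sat G"
proof
  fix f assume f: "f \<in> gen_at0 G"
  then have "holo_at f 0"
    using holo_at_span_at assms unfolding gen_at0_def by blast
  with f show "f \<in> lip_sat G"
    unfolding lip_sat_def
    by (auto intro!: intclos_at_generator holo_at_dbl simp: cscal_prod_def cscal_complex_def)
qed

lemma span_at_scaled_generators:
  fixes f :: "'a::{cscal,real_normed_vector} \<Rightarrow> complex"
  assumes "G' \<subseteq> {(\<lambda>z. c * k z) | c k. k \<in> G}" "span_at a G' f"
  shows "span_at a G f"
proof -
  obtain n and b :: "nat \<Rightarrow> 'a \<Rightarrow> complex" and g where hb: "\<forall>i<n. holo_at (b i) a \<and> g i \<in> G'"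
    and ev: "\<forall>\<^sub>F z in nhds a. f z = (\<Sum>i<n. cscal (b i z) (g i z))"
    using assms(2) unfolding span_at_def by blast
  have "\<forall>i. \<exists>c k. i < n \<longrightarrow> k \<in> G \<and> g i = (\<lambda>z. c * k z)"
    using hb assms(1) by blast
  then obtain c k where ck: "\<forall>i<n. k i \<in> G \<and> g i = (\<lambda>z. c i * k i z)"
    by metis
  have coeffs: "\<forall>i<n. holo_at (\<lambda>z. b i z * c i) a \<and> k i \<in> G"
    using hb ck by (auto intro: holo_at_mult holo_at_const)
  have expansion: "\<forall>\<^sub>F z in nhds a. f z = (\<Sum>i<n. cscal (b i z * c i) (k i z))"
    using ev by eventually_elim (simp add: ck cscal_complex_def mult.assoc)
  show ?thesis
    unfolding span_at_def
    by (intro exI[of _ n] exI[of _ "\<lambda>i z. b i z * c i"] exI[of _ k] conjI coeffs expansion)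
qed

lemma MS3I:
  assumes "holo_at h 0" "\<forall>k\<in>J2 G. holo_at k 0"
    and "J2 (insert h G) \<subseteq> {(\<lambda>z. c * k z) | c k. k \<in> J2 G}"
  shows "h \<in> MS3 G"
proof -
  have "gen_at0 (J2 (insert h G)) \<subseteq> gen_at0 (J2 G)"
    using span_at_scaled_generators[OF assms(3)] unfolding gen_at0_def by blast
  also have "\<dots> \<subseteq> lip_sat (J2 G)"
    using assms(2) by (rule gen_at0_subset_lip_sat)
  finally show ?thesis
    unfolding MS3_def using assms(1) by blast
qed

definition minor :: "(C2 \<Rightarrow> C2) \<Rightarrow> (C2 \<Rightarrow> C2) \<Rightarrow> C2 \<Rightarrow> complex" where
  "minor u v = (\<lambda>z. fst (u z) * snd (v z) - snd (u z) * fst (v z))"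

lemma J2_eq_minors: "J2 G = {minor u v | u v. u \<in> G \<and> v \<in> G}"
  unfolding J2_def minor_def ..

lemma minor_swap: "minor v u = (\<lambda>z. -1 * minor u v z)"
  unfolding minor_def by (simp add: fun_eq_iff algebra_simps)

lemma holo_at_minor:
  assumes "holo_at (\<lambda>z. fst (u z)) a" "holo_at (\<lambda>z. snd (u z)) a"
    and "holo_at (\<lambda>z. fst (v z)) a" "holo_at (\<lambda>z. snd (v z)) a"
  shows "holo_at (minor u v) a"
  unfolding minor_def using assms by (intro holo_at_diff holo_at_mult)

lemma J2_Mex_holo: "\<forall>k\<in>J2 Mex. holo_at k a"
proof -
  have "holo_at (\<lambda>z. fst (u z)) a \<and> holo_at (\<lambda>z. snd (u z)) a" if "u \<in> Mex" for u
    using that unfolding Mex_def by (auto simp: case_prod_unfold holo_at_fst holo_at_snd holo_at_const)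
  then show ?thesis
    unfolding J2_eq_minors by (auto intro: holo_at_minor)
qed

lemma J2_insert_Mex:
  "J2 (insert (\<lambda>(x, y). (x, 3 * y)) Mex) \<subseteq> {(\<lambda>z. c * k z) | c k. k \<in> J2 Mex}"
    (is "J2 (insert ?h Mex) \<subseteq> ?S")
proof -
  define g1 g2 g3 :: "C2 \<Rightarrow> C2"
    where "g1 = (\<lambda>(x, y). (x, y))" and "g2 = (\<lambda>(x, y). (0, x))" and "g3 = (\<lambda>(x, y). (y, 0))"
  have Mex: "Mex = {g1, g2, g3}"
    unfolding Mex_def g1_def g2_def g3_def ..
  have minor_h: "minor ?h v \<in> ?S" if "v \<in> insert ?h Mex" for v
  proof -
    have "minor ?h ?h = (\<lambda>z. 0 * minor g1 g1 z)"
      and "minor ?h g1 = (\<lambda>z. -2 * minor g3 g2 z)"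
      and "minor ?h g2 = (\<lambda>z. 1 * minor g1 g2 z)"
      and "minor ?h g3 = (\<lambda>z. 3 * minor g1 g3 z)"
      unfolding minor_def g1_def g2_def g3_def by (auto simp: fun_eq_iff algebra_simps)
    with that show ?thesis
      unfolding Mex J2_eq_minors by blast
  qed
  show ?thesis
  proof
    fix k assume "k \<in> J2 (insert ?h Mex)"
    then obtain u v where k: "k = minor u v" and u: "u \<in> insert ?h Mex" and v: "v \<in> insert ?h Mex"
      unfolding J2_eq_minors by blast
    consider "u = ?h" | "v = ?h" | "u \<in> Mex" "v \<in> Mex"
      using u v by blast
    then show "k \<in> ?S"
    proof cases
      case 1
      then show ?thesis using minor_h[OF v] k by simp
    next
      case 2
      then obtain c k' where "minor ?h u = (\<lambda>z. c * k' z)" "k' \<in> J2 Mex"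
        using minor_h[OF u] by blast
      then show ?thesis
        unfolding k 2 minor_swap[of u] by (auto intro!: exI[of _ "-c"])
    next
      case 3
      then have "minor u v \<in> J2 Mex"
        unfolding J2_eq_minors by blast
      then show ?thesis
        unfolding k by (intro CollectI exI[of _ 1] exI[of _ "minor u v"]) simp
    qed
  qed
qed

lemma holo_at_x_3y: "holo_at (\<lambda>(x, y). (x, 3 * y) :: C2) a"
proof -
  have "(\<lambda>(x, y). (x, 3 * y) :: C2) = (\<lambda>z. (fst z, 3 * snd z))"
    by (simp add: fun_eq_iff)
  moreover have "bounded_linear (\<lambda>z::C2. (fst z, 3 * snd z))"
    by (intro bounded_linear_Pair bounded_linear_fst bounded_linear_mult_right[THEN bounded_linear_compose]
        bounded_linear_snd)
  ultimately show ?thesis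
    by (auto intro!: holo_at_linear simp: cscal_linear_def cscal_prod_def cscal_complex_def)
qed

text \<open>The double of g along the curve t \<mapsto> ((t,0),(0,t)), composed with (a,b) \<mapsto> fst a - snd b.\<close>
definition axis_defect :: "(C2 \<Rightarrow> C2) \<Rightarrow> complex \<Rightarrow> complex" where
  "axis_defect g t = fst (g (t, 0)) - snd (g (0, t))"

definition axis_balanced :: "(C2 \<Rightarrow> C2) \<Rightarrow> bool" where
  "axis_balanced u \<longleftrightarrow> (\<exists>c. \<forall>t. fst (u (t, 0)) = c * t \<and> snd (u (0, t)) = c * t)"

lemma axis_defect_smallo_of_span:
  assumes gens: "\<forall>u\<in>G. axis_balanced u"
    and "span_at 0 G g"
  shows "axis_defect g \<in> o[at 0](\<lambda>t. t)"
proof -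
  obtain n and b :: "nat \<Rightarrow> C2 \<Rightarrow> complex" and m where hb: "\<forall>i<n. holo_at (b i) 0 \<and> m i \<in> G"
    and ev: "\<forall>\<^sub>F z in nhds 0. g z = (\<Sum>i<n. cscal (b i z) (m i z))"
    using assms(2) unfolding span_at_def by blast
  have "\<forall>i. \<exists>c. i < n \<longrightarrow> (\<forall>t. fst (m i (t, 0)) = c * t \<and> snd (m i (0, t)) = c * t)"
    using hb gens unfolding axis_balanced_def by blast
  then obtain c where c: "\<forall>i<n. \<forall>t. fst (m i (t, 0)) = c i * t \<and> snd (m i (0, t)) = c i * t"
    by metis
  have axes: "((\<lambda>t. (t, 0)) \<longlongrightarrow> (0::C2)) (at 0)" "((\<lambda>t. (0, t)) \<longlongrightarrow> (0::C2)) (at 0)"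
    by (auto simp: zero_prod_def intro!: tendsto_eq_intros)
  have "\<forall>\<^sub>F t in at 0. axis_defect g t = (\<Sum>i<n. c i * t * (b i (t, 0) - b i (0, t)))"
    using eventually_compose_filterlim[OF ev axes(1)] eventually_compose_filterlim[OF ev axes(2)]
  proof eventually_elim
    case (elim t)
    then have "fst (g (t, 0)) = (\<Sum>i<n. b i (t, 0) * (c i * t))"
      and "snd (g (0, t)) = (\<Sum>i<n. b i (0, t) * (c i * t))"
      using c by (simp_all add: fst_sum snd_sum cscal_prod_def cscal_complex_def)
    then show ?case
      unfolding axis_defect_def by (simp add: sum_subtractf[symmetric] algebra_simps)
  qed
  moreover have "(\<lambda>t. \<Sum>i<n. c i * t * (b i (t, 0) - b i (0, t))) \<in> o[at 0](\<lambda>t. t)"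
  proof (rule big_sum_in_smallo)
    fix i assume "i \<in> {..<n}"
    then have "isCont (b i) 0"
      using hb holo_at_imp_isCont by blast
    then have "((\<lambda>t. b i (t, 0) - b i (0, t)) \<longlongrightarrow> b i 0 - b i 0) (at 0)"
      using axes by (intro tendsto_diff isCont_tendsto_compose[of _ "b i"])
    then have "(\<lambda>t. b i (t, 0) - b i (0, t)) \<in> o[at 0](\<lambda>_. 1)"
      by (intro smalloI_tendsto) simp_all
    then have "(\<lambda>t. c i * t * (b i (t, 0) - b i (0, t))) \<in> o[at 0](\<lambda>t. t * 1)"
      by (intro landau_o.big_small_mult) simp
    then show "(\<lambda>t. c i * t * (b i (t, 0) - b i (0, t))) \<in> o[at 0](\<lambda>t. t)"
      by simp
  qed
  ultimately show ?thesis
    by (subst landau_o.small.in_cong) auto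
qed

lemma axis_defect_smallo_of_MS1:
  assumes gens: "\<forall>u\<in>G. axis_balanced u"
    and "h \<in> MS1 G"
  shows "axis_defect h \<in> o[at 0](\<lambda>t. t)"
proof -
  define \<phi> :: "complex \<Rightarrow> C2 \<times> C2" where "\<phi> t = ((t, 0), (0, t))" for t
  have "bounded_linear \<phi>"
    unfolding \<phi>_def by (intro bounded_linear_Pair bounded_linear_ident bounded_linear_zero)
  then have "holo_at \<phi> 0"
    by (rule holo_at_linear) (simp add: cscal_linear_def \<phi>_def cscal_prod_def cscal_complex_def)
  moreover have "\<phi> 0 = (0, 0)"
    by (simp add: \<phi>_def zero_prod_def)
  ultimately have "span_at 0 ((\<lambda>k. k \<circ> \<phi>) ` dbl ` gen_at0 G) (dbl h \<circ> \<phi>)"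
    using assms(2) unfolding MS1_def intclos_at_def by blast
  then obtain n and \<beta> :: "nat \<Rightarrow> complex \<Rightarrow> complex" and F
    where h\<beta>: "\<forall>i<n. holo_at (\<beta> i) 0 \<and> F i \<in> (\<lambda>k. k \<circ> \<phi>) ` dbl ` gen_at0 G"
      and ev: "\<forall>\<^sub>F t in nhds 0. (dbl h \<circ> \<phi>) t = (\<Sum>i<n. cscal (\<beta> i t) (F i t))"
    unfolding span_at_def by blast
  have "\<forall>i. \<exists>g. i < n \<longrightarrow> span_at 0 G g \<and> F i = dbl g \<circ> \<phi>"
    using h\<beta> unfolding gen_at0_def by blast
  then obtain g where g: "\<forall>i<n. span_at 0 G (g i) \<and> F i = dbl (g i) \<circ> \<phi>"
    by metis
  define P :: "C2 \<times> C2 \<Rightarrow> complex" where "P w = fst (fst w) - snd (snd w)" for w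
  have P_sum: "P (\<Sum>i\<in>I. cscal (x i) (w i)) = (\<Sum>i\<in>I. x i * P (w i))"
    for I :: "nat set" and x w
    unfolding P_def
    by (simp add: fst_sum snd_sum cscal_prod_def cscal_complex_def sum_subtractf right_diff_distrib)
  have P_dbl: "P ((dbl k \<circ> \<phi>) t) = axis_defect k t" for k t
    by (simp add: P_def dbl_def \<phi>_def axis_defect_def)
  have "\<forall>\<^sub>F t in at 0. axis_defect h t = (\<Sum>i<n. \<beta> i t * axis_defect (g i) t)"
    using ev unfolding eventually_at_filter
    by (rule eventually_mono) (simp add: P_dbl[symmetric] P_sum g)
  moreover have "(\<lambda>t. \<Sum>i<n. \<beta> i t * axis_defect (g i) t) \<in> o[at 0](\<lambda>t. t)"
  proof (rule big_sum_in_smallo)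
    fix i assume "i \<in> {..<n}"
    then have "isCont (\<beta> i) 0" and "span_at 0 G (g i)"
      using h\<beta> g holo_at_imp_isCont by auto
    then have "\<beta> i \<in> O[at 0](\<lambda>_. 1)" and "axis_defect (g i) \<in> o[at 0](\<lambda>t. t)"
      using axis_defect_smallo_of_span[OF gens] by (auto intro!: bigoI_tendsto simp: isCont_def)
    then have "(\<lambda>t. \<beta> i t * axis_defect (g i) t) \<in> o[at 0](\<lambda>t. 1 * t)"
      by (rule landau_o.big_small_mult)
    then show "(\<lambda>t. \<beta> i t * axis_defect (g i) t) \<in> o[at 0](\<lambda>t. t)"
      by simp
  qed
  ultimately show ?thesis
    by (subst landau_o.small.in_cong) auto
qed

lemma axis_defect_x_3y: "axis_defect (\<lambda>(x, y). (x, 3 * y)) = (\<lambda>t. -2 * t)"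
  by (simp add: fun_eq_iff axis_defect_def)

lemma Mex_axis_balanced: "\<forall>u\<in>Mex. axis_balanced u"
  unfolding Mex_def axis_balanced_def by auto

lemma scaled_id_not_smallo_id:
  assumes "c \<noteq> 0"
  shows "(\<lambda>t::complex. c * t) \<notin> o[at 0](\<lambda>t. t)"
proof
  assume "(\<lambda>t::complex. c * t) \<in> o[at 0](\<lambda>t. t)"
  then have "\<forall>\<^sub>F t in at (0::complex). t = 0"
    using assms by (simp add: landau_o.small_refl_iff)
  moreover have "\<forall>\<^sub>F t in at (0::complex). t \<noteq> 0"
    by (simp add: eventually_at_filter)
  ultimately have "\<forall>\<^sub>F t in at (0::complex). False"
    by eventually_elim simp
  then show False
    by simp
qed

theorem mainTheorem16:
  shows "(\<lambda>(x,y). (x, 3 * y)) \<in> MS3 Mex \<and> (\<lambda>(x,y). (x, 3 * y)) \<notin> MS1 Mex"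
proof
  show "(\<lambda>(x,y). (x, 3 * y)) \<in> MS3 Mex"
    by (rule MS3I[OF holo_at_x_3y J2_Mex_holo J2_insert_Mex])
  show "(\<lambda>(x,y). (x, 3 * y)) \<notin> MS1 Mex"
  proof
    assume "(\<lambda>(x,y). (x, 3 * y)) \<in> MS1 Mex"
    then have "axis_defect (\<lambda>(x, y). (x, 3 * y)) \<in> o[at 0](\<lambda>t. t)"
      by (rule axis_defect_smallo_of_MS1[OF Mex_axis_balanced])
    then show False
      using scaled_id_not_smallo_id[of "-2"] by (simp add: axis_defect_x_3y)
  qed
qed

end
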